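(* Let $P=(O,D,T)$ be an ODT triple and let $\theta$ be a number (in the paper's use, the $k$-th largest value of $\mathrm{cnt}$ among the level-$\ell$ triples generated so far). If $$P.\mathrm{cnt}+\max\{|P.D|\cdot|P.T|,\ |P.O|\cdot|P.T|,\ |P.O|\cdot|P.D|\}\le\theta,$$ then every minimal generalization $\mathrm{CandP}$ of $P$ satisfies $\mathrm{CandP}.\mathrm{cnt}\le\theta$; hence no minimal generalization of $P$ can enter the set of top-$k$ level-$\ell$ ODT triples (ranked by $\mathrm{cnt}$).
   Context: Let $V$ be a finite set of atomic regions, with an undirected neighborhood graph $G=(V,E)$, and let $S=\{1,\dots,M\}$ be the linearly ordered set of atomic timeslots. A region is a nonempty subset $R\subseteq V$ whose induced subgraph in $G$ is connected; a timeslot is a nonempty set of consecutive atomic timeslots. An ODT triple is $P=(O,D,T)$ with $O,D$ regions, $O\cap D=\emptyset$, and $T$ a timeslot; we write $P.O=O$, $P.D=D$, $P.T=T$. Its level is $|O|+|D|+|T|$. A fixed set $\mathcal{A}$ of atomic triples $(o,d,t)\in V\times V\times S$ with $o\ne d$ is given (the atomic patterns). For an ODT triple $P$, $P.\mathrm{cnt}$ denotes the number of atomic triples $(o,d,t)\in O\times D\times T$ that belong to $\mathcal{A}$. A region $R_1$ is a minimal generalization of a region $R_2$ if $R_2\subset R_1$ and $R_1\setminus R_2$ consists of a single atomic region; a timeslot $T_1$ is a minimal generalization of $T_2$ if $T_2\subset T_1$ and $T_1\setminus T_2$ is a single atomic timeslot. An ODT triple $P_1$ is a minimal generalization of $P_2$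 if two of its three components equal those of $P_2$ and the remaining component of $P_1$ is a minimal generalization of the corresponding component of $P_2$. *)

theory Defs
  imports Complex_Main
begin

definition region :: "'v set \<Rightarrow> ('v \<times> 'v) set \<Rightarrow> 'v set \<Rightarrow> bool" where
  "region V E R \<longleftrightarrow> R \<noteq> {} \<and> R \<subseteq> V \<and>
     (\<forall>x\<in>R. \<forall>y\<in>R. (x, y) \<in> (E \<inter> (R \<times> R))\<^sup>*)"

definition timeslot :: "nat \<Rightarrow> nat set \<Rightarrow> bool" where
  "timeslot M T \<longleftrightarrow> T \<noteq> {} \<and> T \<subseteq> {1..M} \<and> (\<exists>a b. T = {a..b})"

type_synonym 'v odt = "'v set \<times> 'v set \<times> nat set"

definition odt_triple :: "'v set \<Rightarrow> ('v \<times> 'v) set \<Rightarrow> nat \<Rightarrow> 'v odt \<Rightarrow> bool" where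
  "odt_triple V E M P \<longleftrightarrow> (case P of (Or, De, T) \<Rightarrow>
     region V E Or \<and> region V E De \<and> Or \<inter> De = {} \<and> timeslot M T)"

definition odtO :: "'v odt \<Rightarrow> 'v set" where "odtO P = fst P"
definition odtD :: "'v odt \<Rightarrow> 'v set" where "odtD P = fst (snd P)"
definition odtT :: "'v odt \<Rightarrow> nat set" where "odtT P = snd (snd P)"

definition cnt :: "('v \<times> 'v \<times> nat) set \<Rightarrow> 'v odt \<Rightarrow> nat" where
  "cnt A P = card {(x, d, t) \<in> A. x \<in> odtO P \<and> d \<in> odtD P \<and> t \<in> odtT P}"

definition min_gen_set :: "'a set \<Rightarrow> 'a set \<Rightarrow> bool" where
  "min_gen_set X1 X2 \<longleftrightarrow> X2 \<subset> X1 \<and> card (X1 - X2) = 1"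

definition min_gen :: "'v set \<Rightarrow> ('v \<times> 'v) set \<Rightarrow> nat \<Rightarrow> 'v odt \<Rightarrow> 'v odt \<Rightarrow> bool" where
  "min_gen V E M P1 P2 \<longleftrightarrow> odt_triple V E M P1 \<and>
     ((min_gen_set (odtO P1) (odtO P2) \<and> odtD P1 = odtD P2 \<and> odtT P1 = odtT P2) \<or>
      (odtO P1 = odtO P2 \<and> min_gen_set (odtD P1) (odtD P2) \<and> odtT P1 = odtT P2) \<or>
      (odtO P1 = odtO P2 \<and> odtD P1 = odtD P2 \<and> min_gen_set (odtT P1) (odtT P2)))"

end

theory Submission
  imports Defs
begin

text \<open>A minimal generalization enlarges exactly one of O, D, T by a single atomic element, so
  its cell set O \<times> D \<times> T grows by one slab whose size is the product of the other two
  components. Each cell holds at most one atomic pattern, so cnt grows by at most that product,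
  which is bounded by the maximum in the hypothesis.\<close>

definition odt_cells :: "'v odt \<Rightarrow> ('v \<times> 'v \<times> nat) set" where
  "odt_cells P = odtO P \<times> odtD P \<times> odtT P"

lemma cnt_eq_card_Int_odt_cells: "cnt A P = card (A \<inter> odt_cells P)"
  unfolding cnt_def odt_cells_def by (rule arg_cong[where f = card]) auto

lemma card_Int_le_card_Int_add_card_Diff:
  assumes "finite A" and "finite (B' - B)"
  shows "card (A \<inter> B') \<le> card (A \<inter> B) + card (B' - B)"
proof -
  have "card (A \<inter> B') \<le> card ((A \<inter> B) \<union> (A \<inter> (B' - B)))"
    using assms(1) by (intro card_mono) auto
  also have "\<dots> \<le> card (A \<inter> B) + card (A \<inter> (B' - B))"
    by (rule card_Un_le)
  also have "card (A \<inter> (B' - B)) \<le> card (B' - B)"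
    using assms(2) by (intro card_mono) auto
  finally show ?thesis by simp
qed

lemma odt_triple_finite:
  assumes "finite V" and "odt_triple V E M P"
  shows "finite (odtO P)" and "finite (odtD P)" and "finite (odtT P)"
  using assms finite_subset
  by (auto simp: odt_triple_def region_def timeslot_def odtO_def odtD_def odtT_def
           split: prod.splits)

lemma odt_cells_Diff_min_gen:
  assumes "min_gen V E M C P"
  obtains a where "odt_cells C - odt_cells P = {a} \<times> odtD P \<times> odtT P"
    | a where "odt_cells C - odt_cells P = odtO P \<times> {a} \<times> odtT P"
    | a where "odt_cells C - odt_cells P = odtO P \<times> odtD P \<times> {a}"
proof -
  have singleton_Diff: "\<exists>a. X1 - X2 = {a}" if "min_gen_set X1 X2" for X1 X2 :: "'b set"
    using that by (simp add: min_gen_set_def card_1_singleton_iff)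
  from assms consider
      (O) "min_gen_set (odtO C) (odtO P)" "odtD C = odtD P" "odtT C = odtT P"
    | (D) "odtO C = odtO P" "min_gen_set (odtD C) (odtD P)" "odtT C = odtT P"
    | (T) "odtO C = odtO P" "odtD C = odtD P" "min_gen_set (odtT C) (odtT P)"
    unfolding min_gen_def by blast
  then show ?thesis
  proof cases
    case O
    with singleton_Diff obtain a where "odtO C - odtO P = {a}" by blast
    with O that(1) show ?thesis by (simp add: odt_cells_def flip: Times_Diff_distrib1)
  next
    case D
    with singleton_Diff obtain a where "odtD C - odtD P = {a}" by blast
    with D that(2) show ?thesis
      by (simp add: odt_cells_def flip: Times_Diff_distrib1 Sigma_Diff_distrib2)
  next
    case T
    with singleton_Diff obtain a where "odtT C - odtT P = {a}" by blast
    with T that(3) show ?thesis by (simp add: odt_cells_def flip: Sigma_Diff_distrib2)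
  qed
qed

lemma cnt_min_gen_le:
  assumes "finite A" and "finite (odtO P)" and "finite (odtD P)" and "finite (odtT P)"
    and "min_gen V E M C P"
  shows "cnt A C \<le> cnt A P + max (card (odtD P) * card (odtT P))
           (max (card (odtO P) * card (odtT P)) (card (odtO P) * card (odtD P)))"
    (is "_ \<le> _ + ?slab")
proof -
  have "finite (odt_cells C - odt_cells P) \<and> card (odt_cells C - odt_cells P) \<le> ?slab"
    using assms(5)
    by (cases rule: odt_cells_Diff_min_gen) (simp_all add: assms(2-4) card_cartesian_product)
  with card_Int_le_card_Int_add_card_Diff[OF assms(1)] show ?thesis
    unfolding cnt_eq_card_Int_odt_cells by (meson add_left_mono order_trans)
qed

theorem lemma2:
  fixes V :: "'v set" and E :: "('v \<times> 'v) set" and M :: nat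
    and A :: "('v \<times> 'v \<times> nat) set" and P :: "'v odt" and \<theta> :: real
  assumes "finite V"
    and "E \<subseteq> V \<times> V" and "sym E"
    and "A \<subseteq> V \<times> V \<times> {1..M}" and "\<forall>(x, d, t)\<in>A. x \<noteq> d"
    and "odt_triple V E M P"
    and "real (cnt A P) + real (max (card (odtD P) * card (odtT P))
           (max (card (odtO P) * card (odtT P)) (card (odtO P) * card (odtD P)))) \<le> \<theta>"
  shows "\<forall>CandP. min_gen V E M CandP P \<longrightarrow> real (cnt A CandP) \<le> \<theta>"
proof (intro allI impI)
  fix C assume "min_gen V E M C P"
  moreover have "finite A"
    using assms(1,4) by (meson finite_SigmaI finite_atLeastAtMost finite_subset)
  ultimately have "cnt A C \<le> cnt A P + max (card (odtD P) * card (odtT P))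
           (max (card (odtO P) * card (odtT P)) (card (odtO P) * card (odtD P)))"
    using cnt_min_gen_le odt_triple_finite[OF assms(1,6)] by blast
  then show "real (cnt A C) \<le> \<theta>"
    using assms(7) by linarith
qed

end
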